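(* Let $a<b$ be elements of $\mathcal{C}_n$ and let $Id\left(\mathcal{STR}^{(n)}\{a,b\}\right)=\{a_\ell b_{n-\ell}:\ a+1\le\ell\le b\}$. Then $Id\left(\mathcal{STR}^{(n)}\{a,b\}\right)$ is a subsemiring of $\mathcal{STR}^{(n)}\{a,b\}$ which consists exactly of the (multiplicatively) idempotent elements of $\mathcal{STR}^{(n)}\{a,b\}$ different from $\overline{a}$ and $\overline{b}$, and it has $b-a$ elements.
   Context: $\mathcal{C}_n=\{0,1,\dots,n-1\}$ with its usual order; $\widehat{\mathcal{E}}_{\mathcal{C}_n}$ is the set of all order-preserving maps $\mathcal{C}_n\to\mathcal{C}_n$ (not required to fix $0$), a semiring with $(\alpha+\beta)(x)=\max(\alpha(x),\beta(x))$ and $(\alpha\cdot\beta)(x)=\beta(\alpha(x))$. The string $\mathcal{STR}^{(n)}\{a,b\}$ is the set of $\alpha\in\widehat{\mathcal{E}}_{\mathcal{C}_n}$ with image in $\{a,b\}$; its elements are written $a_kb_{n-k}$ ($0\le k\le n$), the map sending $0,\dots,k-1$ to $a$ and $k,\dots,n-1$ to $b$; $\overline{a}$, $\overline{b}$ are the constant maps. *)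

theory Defs
  imports Main
begin

text \<open>Maps C_n -> C_n are modelled as functions nat => nat that are 0 outside {0..<n}
  (extensional representation), so equality of maps is HOL equality.\<close>

definition hatE :: "nat \<Rightarrow> (nat \<Rightarrow> nat) set" where
  "hatE n = {f. (\<forall>x<n. f x < n) \<and> (\<forall>x y. x \<le> y \<longrightarrow> y < n \<longrightarrow> f x \<le> f y)
                \<and> (\<forall>x. n \<le> x \<longrightarrow> f x = 0)}"

definition splus :: "(nat \<Rightarrow> nat) \<Rightarrow> (nat \<Rightarrow> nat) \<Rightarrow> (nat \<Rightarrow> nat)" where
  "splus f g = (\<lambda>x. max (f x) (g x))"

definition stimes :: "nat \<Rightarrow> (nat \<Rightarrow> nat) \<Rightarrow> (nat \<Rightarrow> nat) \<Rightarrow> (nat \<Rightarrow> nat)" where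
  "stimes n f g = (\<lambda>x. if x < n then g (f x) else 0)"

definition STRn :: "nat \<Rightarrow> nat \<Rightarrow> nat \<Rightarrow> (nat \<Rightarrow> nat) set" where
  "STRn n a b = {f \<in> hatE n. \<forall>x<n. f x \<in> {a, b}}"

text \<open>a_k b_{n-k}: sends 0..k-1 to a and k..n-1 to b.\<close>
definition str_elem :: "nat \<Rightarrow> nat \<Rightarrow> nat \<Rightarrow> nat \<Rightarrow> (nat \<Rightarrow> nat)" where
  "str_elem n a b k = (\<lambda>x. if x < k then a else if x < n then b else 0)"

definition const_map :: "nat \<Rightarrow> nat \<Rightarrow> (nat \<Rightarrow> nat)" where
  "const_map n c = (\<lambda>x. if x < n then c else 0)"

definition IdSTR :: "nat \<Rightarrow> nat \<Rightarrow> nat \<Rightarrow> (nat \<Rightarrow> nat) set" where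
  "IdSTR n a b = {str_elem n a b l | l. a + 1 \<le> l \<and> l \<le> b}"

definition is_subsemiring :: "nat \<Rightarrow> (nat \<Rightarrow> nat) set \<Rightarrow> (nat \<Rightarrow> nat) set \<Rightarrow> bool" where
  "is_subsemiring n S T \<longleftrightarrow> S \<subseteq> T \<and> S \<noteq> {} \<and>
     (\<forall>f\<in>S. \<forall>g\<in>S. splus f g \<in> S \<and> stimes n f g \<in> S)"

end

theory Submission
  imports Defs
begin

text \<open>Every element of the string is a step map a_k b_(n-k), and a_k b_(n-k) \<cdot> a_l b_(n-l) is
  again a_k b_(n-k) exactly when a_l b_(n-l) fixes both a and b, i.e. when a < l \<le> b.
  So the idempotents other than the two constants are the a_l b_(n-l) with a < l \<le> b; they are
  closed under \<cdot> (which keeps the left factor) and under + (which takes the smaller step),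
  and distinct l give distinct maps.\<close>

lemma STRn_eq_image_str_elem:
  assumes "a \<le> b" "b < n"
  shows "STRn n a b = str_elem n a b ` {..n}"
proof
  show "str_elem n a b ` {..n} \<subseteq> STRn n a b"
    using assms unfolding STRn_def hatE_def str_elem_def by auto
next
  show "STRn n a b \<subseteq> str_elem n a b ` {..n}"
  proof
    fix f assume f: "f \<in> STRn n a b"
    have mono: "\<And>x y. x \<le> y \<Longrightarrow> y < n \<Longrightarrow> f x \<le> f y"
      and zero: "\<And>x. n \<le> x \<Longrightarrow> f x = 0" and val: "\<And>x. x < n \<Longrightarrow> f x \<in> {a, b}"
      using f unfolding STRn_def hatE_def by auto
    define k where "k = (LEAST x. x = n \<or> f x = b)"
    have "k = n \<or> f k = b"
      unfolding k_def by (rule LeastI[of _ n]) simp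
    have "k \<le> n"
      unfolding k_def by (rule Least_le) simp
    have below: "f x = a" if "x < k" for x
      using not_less_Least[OF that[unfolded k_def]] val[of x] that \<open>k \<le> n\<close> by auto
    have above: "f x = b" if "k \<le> x" "x < n" for x
      using mono[OF that] val[of x] \<open>k = n \<or> f k = b\<close> that assms(1) by auto
    have "f = str_elem n a b k"
      unfolding str_elem_def using below above zero by (auto simp: fun_eq_iff)
    with \<open>k \<le> n\<close> show "f \<in> str_elem n a b ` {..n}" by blast
  qed
qed

lemma inj_on_str_elem:
  assumes "a \<noteq> b"
  shows "inj_on (str_elem n a b) {..n}"
proof (rule inj_onI)
  fix k l assume kl: "k \<in> {..n}" "l \<in> {..n}" "str_elem n a b k = str_elem n a b l"
  show "k = l"
  proof (rule ccontr)
    assume "k \<noteq> l"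
    then have "str_elem n a b k (min k l) \<noteq> str_elem n a b l (min k l)"
      using kl(1,2) assms unfolding str_elem_def by (auto simp: min_def)
    with kl(3) show False by simp
  qed
qed

lemma str_elem_n_eq_const_map: "str_elem n a b n = const_map n a"
  unfolding str_elem_def const_map_def by (simp add: fun_eq_iff)

lemma str_elem_0_eq_const_map: "str_elem n a b 0 = const_map n b"
  unfolding str_elem_def const_map_def by (simp add: fun_eq_iff)

lemma splus_str_elem:
  assumes "a \<le> b" "k \<le> n" "l \<le> n"
  shows "splus (str_elem n a b k) (str_elem n a b l) = str_elem n a b (min k l)"
  using assms unfolding splus_def str_elem_def by (auto simp: fun_eq_iff)

lemma stimes_str_elem:
  assumes "k \<le> n"
  shows "stimes n (str_elem n a b k) g = str_elem n (g a) (g b) k"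
  using assms unfolding stimes_def str_elem_def by (auto simp: fun_eq_iff)

lemma str_elem_fixes_iff:
  assumes "a < b" "b < n"
  shows "str_elem n a b l a = a \<and> str_elem n a b l b = b \<longleftrightarrow> a < l \<and> l \<le> b"
  using assms unfolding str_elem_def by auto

lemma stimes_str_elem_left:
  assumes "a < b" "b < n" "a < l" "l \<le> b" "k \<le> n"
  shows "stimes n (str_elem n a b k) (str_elem n a b l) = str_elem n a b k"
  using str_elem_fixes_iff[OF assms(1,2), of l] assms(3-5) by (simp add: stimes_str_elem)

text \<open>For a genuine step (0 < k < n) both a and b are values, and idempotency says that values are
  fixed points.\<close>

lemma stimes_str_elem_idem_iff:
  assumes "a < b" "b < n" "0 < k" "k < n"
  shows "stimes n (str_elem n a b k) (str_elem n a b k) = str_elem n a b k \<longleftrightarrow> a < k \<and> k \<le> b"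
proof
  let ?e = "str_elem n a b k"
  assume "stimes n ?e ?e = ?e"
  then have idem: "?e (?e x) = ?e x" if "x < n" for x
    using fun_cong[of _ _ x] that by (fastforce simp: stimes_def)
  have "?e 0 = a" "?e (n - 1) = b"
    using assms unfolding str_elem_def by auto
  then have "?e a = a \<and> ?e b = b"
    using idem[of 0] idem[of "n - 1"] assms(4) by simp
  then show "a < k \<and> k \<le> b"
    using str_elem_fixes_iff[OF assms(1,2)] by blast
qed (use assms in \<open>simp add: stimes_str_elem_left\<close>)

lemma nonconst_idempotent_str_elem_iff:
  assumes "a < b" "b < n" "k \<le> n"
  shows "stimes n (str_elem n a b k) (str_elem n a b k) = str_elem n a b k
      \<and> str_elem n a b k \<noteq> const_map n a \<and> str_elem n a b k \<noteq> const_map n b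
    \<longleftrightarrow> a < k \<and> k \<le> b"
proof -
  have injective: "str_elem n a b k = str_elem n a b j \<longleftrightarrow> k = j" if "j \<le> n" for j
    using inj_onD[OF inj_on_str_elem[of a b n]] assms that by blast
  have "str_elem n a b k \<noteq> const_map n a \<longleftrightarrow> k < n"
    using injective[of n] assms(3) by (auto simp: str_elem_n_eq_const_map)
  moreover have "str_elem n a b k \<noteq> const_map n b \<longleftrightarrow> 0 < k"
    using injective[of 0] by (auto simp: str_elem_0_eq_const_map)
  ultimately show ?thesis
    using stimes_str_elem_idem_iff[OF assms(1,2)] assms by auto
qed

lemma nonconst_idempotents_STRn:
  assumes "a < b" "b < n"
  shows "{f \<in> STRn n a b. stimes n f f = f \<and> f \<noteq> const_map n a \<and> f \<noteq> const_map n b}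
    = str_elem n a b ` {a<..b}"
proof -
  have "{f \<in> STRn n a b. stimes n f f = f \<and> f \<noteq> const_map n a \<and> f \<noteq> const_map n b}
      = str_elem n a b ` {k \<in> {..n}. a < k \<and> k \<le> b}"
    using nonconst_idempotent_str_elem_iff[OF assms]
    unfolding STRn_eq_image_str_elem[OF less_imp_le[OF assms(1)] assms(2)] by auto
  also have "{k \<in> {..n}. a < k \<and> k \<le> b} = {a<..b}"
    using assms by auto
  finally show ?thesis .
qed

lemma is_subsemiring_image_str_elem:
  assumes "a < b" "b < n"
  shows "is_subsemiring n (str_elem n a b ` {a<..b}) (STRn n a b)"
  unfolding is_subsemiring_def
proof (intro conjI ballI)
  show "str_elem n a b ` {a<..b} \<subseteq> STRn n a b"
    using nonconst_idempotents_STRn[OF assms] by blast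
  show "str_elem n a b ` {a<..b} \<noteq> {}"
    using assms(1) by simp
next
  fix f g assume "f \<in> str_elem n a b ` {a<..b}" "g \<in> str_elem n a b ` {a<..b}"
  then obtain k l where kl: "a < k" "k \<le> b" "a < l" "l \<le> b"
    and fg: "f = str_elem n a b k" "g = str_elem n a b l"
    by auto
  have "splus f g = str_elem n a b (min k l)"
    using kl assms by (simp add: fg splus_str_elem)
  moreover have "min k l \<in> {a<..b}"
    using kl by (simp add: min_def)
  ultimately show "splus f g \<in> str_elem n a b ` {a<..b}"
    by blast
  have "stimes n f g = f"
    using kl assms by (simp add: fg stimes_str_elem_left)
  then show "stimes n f g \<in> str_elem n a b ` {a<..b}"
    using \<open>f \<in> str_elem n a b ` {a<..b}\<close> by simp
qed

theorem proposition10: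
  fixes n a b :: nat
  assumes "a < b" and "b < n"
  shows "is_subsemiring n (IdSTR n a b) (STRn n a b)
    \<and> IdSTR n a b = {f \<in> STRn n a b. stimes n f f = f \<and> f \<noteq> const_map n a \<and> f \<noteq> const_map n b}
    \<and> card (IdSTR n a b) = b - a"
proof -
  have Id: "IdSTR n a b = str_elem n a b ` {a<..b}"
    unfolding IdSTR_def by (auto simp: Suc_le_eq)
  have "inj_on (str_elem n a b) {a<..b}"
    using assms by (intro inj_on_subset[OF inj_on_str_elem]) auto
  then have "card (IdSTR n a b) = b - a"
    by (simp add: Id card_image)
  then show ?thesis
    using is_subsemiring_image_str_elem[OF assms] nonconst_idempotents_STRn[OF assms]
    by (simp add: Id)
qed

end
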